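(* Let $r \in \mathbb{N}$. Then $\mathsf{D}_2(C_2^r) < (3r + 6)/2$.
   Context: $C_2^r$ is the elementary abelian $2$-group of rank $r$. A sequence over a finite abelian group $G$ is a finite unordered list of elements of $G$ with repetitions allowed; it is zero-sum if its terms sum to $0$. $\mathsf{D}_k(G)$ is the smallest integer $\ell$ such that every sequence over $G$ of length at least $\ell$ has $k$ disjoint non-empty zero-sum subsequences. *)

theory Defs
  imports Complex_Main "HOL-Library.Multiset" "HOL-Library.Z2" "HOL-Library.Function_Algebras"
begin

text \<open>The elementary abelian 2-group C_2^r, realised as the subgroup of
  the pointwise group (nat => bit) consisting of vectors supported on {0..<r}.\<close>
definition C2r :: "nat \<Rightarrow> (nat \<Rightarrow> bit) set" where
  "C2r r = {v. \<forall>i\<ge>r. v i = 0}"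

definition has_k_disjoint_zs :: "nat \<Rightarrow> ('a::comm_monoid_add) multiset \<Rightarrow> bool" where
  "has_k_disjoint_zs k S \<longleftrightarrow>
     (\<exists>Ts :: 'a multiset list. length Ts = k \<and> sum_list Ts \<subseteq># S \<and>
        (\<forall>T\<in>set Ts. T \<noteq> {#} \<and> sum_mset T = 0))"

definition Dk :: "nat \<Rightarrow> ('a::comm_monoid_add) set \<Rightarrow> nat" where
  "Dk k G = (LEAST l. \<forall>S. set_mset S \<subseteq> G \<longrightarrow> size S \<ge> l \<longrightarrow> has_k_disjoint_zs k S)"

end

theory Submission imports Defs begin

text \<open>Let \<open>N\<close> be a family in \<open>C\<^sub>2\<^sup>r\<close> without two disjoint nonempty zero-sum
  subfamilies; we show \<open>2 |N| \<le> 3r + 3\<close> by induction. Pick \<open>e \<in> N\<close>. If \<open>e = 0\<close>, the rest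
  is zero-sum free, so has at most \<open>r\<close> elements (Davenport). Otherwise, pass to the quotient
  by \<open>\<langle>e\<rangle>\<close>, realised by killing a coordinate \<open>i\<close> with \<open>e\<^sub>i = 1\<close>. If the image of
  \<open>N - {e}\<close> still has no two disjoint zero sums, induction gives the bound. Otherwise it has
  two, \<open>A\<close> and \<open>B\<close>, whose sums in \<open>C\<^sub>2\<^sup>r\<close> must both equal \<open>e\<close>. Then, with
  \<open>Z = N - {e} - A - B\<close>, both \<open>Z \<union> A\<close> and \<open>Z \<union> B\<close> are zero-sum free (their complements
  \<open>{e} \<union> B\<close>, \<open>{e} \<union> A\<close> sum to zero), and \<open>A \<union> B\<close> is a zero sum not splitting into two,
  so \<open>|A| + |B| \<le> r + 1\<close>; adding up gives the bound.\<close>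

definition zero_sum_free :: "('a \<Rightarrow> 'b::comm_monoid_add) \<Rightarrow> 'a set \<Rightarrow> bool" where
  "zero_sum_free f N \<longleftrightarrow> (\<forall>W\<subseteq>N. W \<noteq> {} \<longrightarrow> sum f W \<noteq> 0)"

definition two_disjoint_zero_sums :: "('a \<Rightarrow> 'b::comm_monoid_add) \<Rightarrow> 'a set \<Rightarrow> bool" where
  "two_disjoint_zero_sums f N \<longleftrightarrow>
     (\<exists>A B. A \<subseteq> N \<and> B \<subseteq> N \<and> A \<inter> B = {} \<and> A \<noteq> {} \<and> B \<noteq> {} \<and> sum f A = 0 \<and> sum f B = 0)"

definition vectors_on :: "'i set \<Rightarrow> ('i \<Rightarrow> bit) set" where
  "vectors_on I = {v. \<forall>j. j \<notin> I \<longrightarrow> v j = 0}"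

lemma bit_fun_add_self [simp]: "(v :: 'i \<Rightarrow> bit) + v = 0"
  by (simp add: fun_eq_iff)

lemma sum_fun_apply: "sum f A j = (\<Sum>x\<in>A. f x j)"
  by (induction A rule: infinite_finite_induct) auto

lemma sum_in_vectors_on: "(\<And>x. x \<in> A \<Longrightarrow> f x \<in> vectors_on I) \<Longrightarrow> sum f A \<in> vectors_on I"
  by (auto simp: vectors_on_def sum_fun_apply)

lemma
  fixes I :: "'i set"
  assumes "finite I"
  shows finite_vectors_on: "finite (vectors_on I)"
    and card_vectors_on_le: "card (vectors_on I) \<le> 2 ^ card I"
proof -
  have inj: "inj_on (\<lambda>v. {j. v j = 1}) (vectors_on I)"
  proof (rule inj_onI)
    fix v w :: "'i \<Rightarrow> bit" assume "{j. v j = 1} = {j. w j = 1}"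
    then have "v j = 1 \<longleftrightarrow> w j = 1" for j
      by blast
    then show "v = w"
      by (metis bit_not_one_iff ext)
  qed
  have sub: "(\<lambda>v. {j. v j = 1}) ` vectors_on I \<subseteq> Pow I"
    by (auto simp: vectors_on_def)
  show "finite (vectors_on I)"
    using finite_imageD[OF finite_subset[OF sub] inj] assms by simp
  show "card (vectors_on I) \<le> 2 ^ card I"
    using card_inj_on_le[OF inj sub] assms by (simp add: card_Pow)
qed

text \<open>The upper bound in Davenport's \<open>D(C\<^sub>2\<^sup>r) = r + 1\<close>: if \<open>card U > card I\<close>, two distinct subsets
  of \<open>U\<close> have the same sum, and their symmetric difference sums to zero.\<close>
lemma card_le_if_zero_sum_free:
  assumes "finite I" "finite U" "f ` U \<subseteq> vectors_on I" "zero_sum_free f U"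
  shows "card U \<le> card I"
proof (rule ccontr)
  assume "\<not> card U \<le> card I"
  have "sum f ` Pow U \<subseteq> vectors_on I"
    using assms(3) by (auto intro: sum_in_vectors_on)
  then have "card (sum f ` Pow U) \<le> card (vectors_on I)"
    by (rule card_mono[OF finite_vectors_on[OF assms(1)]])
  also have "\<dots> \<le> 2 ^ card I"
    using assms(1) by (rule card_vectors_on_le)
  also have "\<dots> < card (Pow U)"
    using \<open>\<not> card U \<le> card I\<close> assms(2) by (simp add: card_Pow)
  finally have "\<not> inj_on (sum f) (Pow U)"
    by (auto dest: card_image)
  then obtain A B where AB: "A \<subseteq> U" "B \<subseteq> U" "A \<noteq> B" "sum f A = sum f B"
    unfolding inj_on_def by auto
  have fin: "finite A" "finite B"
    using AB assms(2) finite_subset by auto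
  have "sum f (A \<inter> B) + sum f (A - B) = sum f (A \<inter> B) + sum f (B - A)"
    using AB(4) sum.Int_Diff[OF fin(1), of f B] sum.Int_Diff[OF fin(2), of f A]
    by (simp add: Int_commute)
  then have "sum f (A - B) = sum f (B - A)"
    by simp
  then have "sum f ((A - B) \<union> (B - A)) = 0"
    using fin by (subst sum.union_disjoint) auto
  moreover have "(A - B) \<union> (B - A) \<noteq> {}" "(A - B) \<union> (B - A) \<subseteq> U"
    using AB by auto
  ultimately show False
    using assms(4) unfolding zero_sum_free_def by blast
qed

lemma two_disjoint_zero_sumsI:
  "A \<subseteq> N \<Longrightarrow> B \<subseteq> N \<Longrightarrow> A \<inter> B = {} \<Longrightarrow> A \<noteq> {} \<Longrightarrow> B \<noteq> {} \<Longrightarrow>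
    sum f A = 0 \<Longrightarrow> sum f B = 0 \<Longrightarrow> two_disjoint_zero_sums f N"
  unfolding two_disjoint_zero_sums_def by blast

lemma zero_sum_free_diff:
  assumes "\<not> two_disjoint_zero_sums f N" "Y \<subseteq> N" "Y \<noteq> {}" "sum f Y = 0"
  shows "zero_sum_free f (N - Y)"
  unfolding zero_sum_free_def
proof (intro allI impI notI)
  fix W assume "W \<subseteq> N - Y" "W \<noteq> {}" "sum f W = 0"
  with assms(2-4) have "two_disjoint_zero_sums f N"
    by (intro two_disjoint_zero_sumsI[of W N Y]) auto
  with assms(1) show False ..
qed

lemma no_two_disjoint_zero_sums_subset:
  "\<not> two_disjoint_zero_sums f N \<Longrightarrow> M \<subseteq> N \<Longrightarrow> \<not> two_disjoint_zero_sums f M"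
  unfolding two_disjoint_zero_sums_def by (meson order_trans)

text \<open>Fix \<open>x \<in> U\<close>: a nonempty zero sum \<open>W \<subseteq> U - {x}\<close> would leave the zero sum \<open>U - W \<ni> x\<close>.\<close>
lemma card_le_Suc_if_zero_sum:
  fixes f :: "'a \<Rightarrow> 'i \<Rightarrow> bit"
  assumes "finite I" "finite U" "f ` U \<subseteq> vectors_on I" "sum f U = 0"
    and "\<not> two_disjoint_zero_sums f U"
  shows "card U \<le> Suc (card I)"
proof (cases "U = {}")
  case False
  then obtain x where x: "x \<in> U" by blast
  have "zero_sum_free f (U - {x})"
    unfolding zero_sum_free_def
  proof (intro allI impI notI)
    fix W assume W: "W \<subseteq> U - {x}" "W \<noteq> {}" "sum f W = 0"
    have "sum f (U - W) = sum f U - sum f W"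
      using W assms(2) by (intro sum_diff) auto
    with W assms(2,4) x have "two_disjoint_zero_sums f U"
      by (intro two_disjoint_zero_sumsI[of W U "U - W"]) auto
    with assms(5) show False ..
  qed
  then have "card (U - {x}) \<le> card I"
    using assms(1-3) by (intro card_le_if_zero_sum_free) auto
  then show ?thesis
    using x assms(2) by (simp add: card_Diff_singleton)
qed simp

text \<open>For \<open>w\<^sub>i = 1\<close>, \<open>reduce i w\<close> is the linear projection along \<open>w\<close> onto \<open>{v. v\<^sub>i = 0}\<close>;
  its kernel is \<open>{0, w}\<close>, so it realises the quotient map by \<open>\<langle>w\<rangle>\<close>.\<close>
definition reduce :: "'i \<Rightarrow> ('i \<Rightarrow> bit) \<Rightarrow> ('i \<Rightarrow> bit) \<Rightarrow> 'i \<Rightarrow> bit" where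
  "reduce i w v = (\<lambda>j. v j + v i * w j)"

lemma reduce_add: "reduce i w (u + v) = reduce i w u + reduce i w v"
  unfolding reduce_def by (rule ext) (simp only: plus_fun_apply distrib_right add_ac)

lemma sum_reduce: "(\<Sum>x\<in>A. reduce i w (f x)) = reduce i w (sum f A)"
proof -
  have "reduce i w 0 = 0"
    by (simp add: reduce_def fun_eq_iff)
  then show ?thesis
    using sum_comp_morphism[of "reduce i w" f A] by (simp add: reduce_add o_def)
qed

lemma reduce_eq_0_imp:
  assumes "reduce i w v = 0"
  shows "v = 0 \<or> v = w"
proof -
  obtain c where c: "v i = c" by simp
  have "v j = c * w j" for j
  proof -
    have "v j + c * w j = 0"
      using fun_cong[OF assms[unfolded reduce_def c], of j] by (simp only: zero_fun_apply)
    then have "c * w j = - v j"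
      by (simp only: add_eq_0_iff)
    then show ?thesis by simp
  qed
  then have "v = (\<lambda>j. c * w j)" ..
  then show ?thesis
    by (cases "c = 0") (simp_all add: fun_eq_iff)
qed

lemma reduce_in_vectors_on:
  "w i = 1 \<Longrightarrow> v \<in> vectors_on I \<Longrightarrow> w \<in> vectors_on I \<Longrightarrow> reduce i w v \<in> vectors_on (I - {i})"
  by (auto simp: vectors_on_def reduce_def)

lemma sum_insert_eq_0:
  fixes f :: "'a \<Rightarrow> 'i \<Rightarrow> bit"
  assumes "finite X" "e \<notin> X" "sum f X = f e"
  shows "sum f (insert e X) = 0"
  using assms by simp

lemma sum_eq_if_no_two_disjoint_zero_sums:
  fixes f :: "'a \<Rightarrow> 'i \<Rightarrow> bit"
  assumes "\<not> two_disjoint_zero_sums f N" "finite N" "e \<in> N"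
    and "X \<subseteq> N - {e}" "Y \<subseteq> N - {e}" "X \<inter> Y = {}" "X \<noteq> {}" "Y \<noteq> {}"
    and "sum f X \<in> {0, f e}" "sum f Y \<in> {0, f e}"
  shows "sum f X = f e"
proof (rule ccontr)
  assume "sum f X \<noteq> f e"
  then have "sum f X = 0"
    using assms(9) by simp
  define Y' where "Y' = (if sum f Y = 0 then Y else insert e Y)"
  have "finite Y"
    using assms(2,5) finite_subset by blast
  then have "sum f Y' = 0"
    using assms(5,10) by (auto simp: Y'_def intro: sum_insert_eq_0)
  moreover have "Y' \<subseteq> N" "X \<inter> Y' = {}" "Y' \<noteq> {}"
    using assms(3-8) by (auto simp: Y'_def)
  ultimately have "two_disjoint_zero_sums f N"
    using assms(4,7) \<open>sum f X = 0\<close> by (intro two_disjoint_zero_sumsI[of X N Y']) auto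
  with assms(1) show False ..
qed

lemma double_card_le_if_two_sums_eq:
  fixes f :: "'a \<Rightarrow> 'i \<Rightarrow> bit"
  assumes I: "finite I" and N: "finite N" "f ` N \<subseteq> vectors_on I"
    and no_two: "\<not> two_disjoint_zero_sums f N"
    and e: "e \<in> N" and AB: "A \<subseteq> N - {e}" "B \<subseteq> N - {e}" "A \<inter> B = {}"
    and sums: "sum f A = f e" "sum f B = f e"
  shows "2 * card N \<le> 3 * card I + 3"
proof -
  have fin: "finite A" "finite B"
    using AB N(1) by (meson Diff_subset finite_subset subset_trans)+
  have complement: "card N - Suc (card Y) \<le> card I \<and> Suc (card Y) \<le> card N"
    if Y: "Y \<subseteq> N - {e}" "finite Y" "sum f Y = f e" for Y
  proof
    have "insert e Y \<subseteq> N" "sum f (insert e Y) = 0"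
      using Y e by (auto intro: sum_insert_eq_0)
    then have "zero_sum_free f (N - insert e Y)"
      by (intro zero_sum_free_diff[OF no_two]) auto
    then have "card (N - insert e Y) \<le> card I"
      using N by (intro card_le_if_zero_sum_free[OF I]) auto
    moreover have "card (insert e Y) = Suc (card Y)"
      using Y by (subst card_insert_disjoint) auto
    ultimately show "card N - Suc (card Y) \<le> card I"
      using \<open>insert e Y \<subseteq> N\<close> Y(2) by (simp add: card_Diff_subset)
    show "Suc (card Y) \<le> card N"
      using \<open>card (insert e Y) = Suc (card Y)\<close> \<open>insert e Y \<subseteq> N\<close> N(1) card_mono by metis
  qed
  have "card (A \<union> B) \<le> Suc (card I)"
  proof (rule card_le_Suc_if_zero_sum[OF I])
    show "sum f (A \<union> B) = 0"
      using fin AB(3) sums by (simp add: sum.union_disjoint)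
    show "\<not> two_disjoint_zero_sums f (A \<union> B)"
      using AB by (intro no_two_disjoint_zero_sums_subset[OF no_two]) auto
  qed (use fin N AB in auto)
  then have "card A + card B \<le> Suc (card I)"
    using fin AB(3) by (simp add: card_Un_disjoint)
  with complement[OF AB(1) fin(1) sums(1)] complement[OF AB(2) fin(2) sums(2)]
  show ?thesis by linarith
qed

lemma double_card_le_if_reduction_splits:
  fixes f :: "'a \<Rightarrow> 'i \<Rightarrow> bit"
  assumes I: "finite I" and N: "finite N" "f ` N \<subseteq> vectors_on I"
    and no_two: "\<not> two_disjoint_zero_sums f N" and e: "e \<in> N"
    and split: "two_disjoint_zero_sums (\<lambda>x. reduce i (f e) (f x)) (N - {e})"
  shows "2 * card N \<le> 3 * card I + 3"
proof -
  obtain A B where AB: "A \<subseteq> N - {e}" "B \<subseteq> N - {e}" "A \<inter> B = {}" "A \<noteq> {}" "B \<noteq> {}"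
    "reduce i (f e) (sum f A) = 0" "reduce i (f e) (sum f B) = 0"
    using split unfolding two_disjoint_zero_sums_def sum_reduce by blast
  have sum_A: "sum f A \<in> {0, f e}" and sum_B: "sum f B \<in> {0, f e}"
    using AB(6,7) by (auto dest: reduce_eq_0_imp)
  have "B \<inter> A = {}"
    using AB(3) by blast
  have "sum f A = f e" "sum f B = f e"
    using sum_eq_if_no_two_disjoint_zero_sums[OF no_two N(1) e AB(1-5) sum_A sum_B]
      sum_eq_if_no_two_disjoint_zero_sums[OF no_two N(1) e AB(2,1) \<open>B \<inter> A = {}\<close> AB(5,4) sum_B sum_A]
    by auto
  then show ?thesis
    using AB(1-3) by (intro double_card_le_if_two_sums_eq[OF I N no_two e])
qed

theorem double_card_le_if_no_two_disjoint_zero_sums: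
  fixes f :: "'a \<Rightarrow> 'i \<Rightarrow> bit"
  assumes "finite I" "finite N" "f ` N \<subseteq> vectors_on I" "\<not> two_disjoint_zero_sums f N"
  shows "2 * card N \<le> 3 * card I + 3"
  using assms
proof (induction "card N" arbitrary: N I f rule: less_induct)
  case less
  note I = less.prems(1) and N = less.prems(2,3) and no_two = less.prems(4)
  show ?case
  proof (cases "N = {}")
    case False
    then obtain e where e: "e \<in> N" by blast
    have card_N: "card N = Suc (card (N - {e}))"
      using N(1) e by (rule card_Suc_Diff1[symmetric])
    show ?thesis
    proof (cases "f e = 0")
      case True
      then have "zero_sum_free f (N - {e})"
        using e by (intro zero_sum_free_diff[OF no_two]) auto
      then have "card (N - {e}) \<le> card I"
        using N by (intro card_le_if_zero_sum_free[OF I]) auto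
      with card_N show ?thesis by linarith
    next
      case False
      then obtain i where "f e i \<noteq> 0" by (auto simp: fun_eq_iff)
      then have i: "f e i = 1" by simp
      have "f e \<in> vectors_on I" using e N(2) by auto
      with i have "i \<in> I" by (auto simp: vectors_on_def)
      define g where "g = (\<lambda>x. reduce i (f e) (f x))"
      show ?thesis
      proof (cases "two_disjoint_zero_sums g (N - {e})")
        case False
        have "g ` (N - {e}) \<subseteq> vectors_on (I - {i})"
          using N(2) \<open>f e \<in> vectors_on I\<close> i by (auto simp: g_def intro: reduce_in_vectors_on)
        then have "2 * card (N - {e}) \<le> 3 * card (I - {i}) + 3"
          using False I N(1) card_N by (intro less.hyps) auto
        moreover have "card I = Suc (card (I - {i}))"
          using I \<open>i \<in> I\<close> by (rule card_Suc_Diff1[symmetric])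
        ultimately show ?thesis
          using card_N by linarith
      next
        case True
        then show ?thesis
          unfolding g_def by (rule double_card_le_if_reduction_splits[OF I N no_two e])
      qed
    qed
  qed simp
qed

lemma has_two_disjoint_zs_mset:
  fixes xs :: "'b::comm_monoid_add list"
  assumes "two_disjoint_zero_sums (nth xs) {0..<length xs}"
  shows "has_k_disjoint_zs 2 (mset xs)"
proof -
  obtain A B where AB: "A \<subseteq> {0..<length xs}" "B \<subseteq> {0..<length xs}" "A \<inter> B = {}"
    "A \<noteq> {}" "B \<noteq> {}" "sum (nth xs) A = 0" "sum (nth xs) B = 0"
    using assms unfolding two_disjoint_zero_sums_def by blast
  have fin: "finite A" "finite B"
    using AB(1,2) finite_subset by auto
  let ?Ts = "[image_mset (nth xs) (mset_set A), image_mset (nth xs) (mset_set B)]"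
  have "sum_list ?Ts = image_mset (nth xs) (mset_set (A \<union> B))"
    using fin AB(3) by (simp add: mset_set_Union)
  also have "\<dots> \<subseteq># image_mset (nth xs) (mset_set {0..<length xs})"
    using AB(1,2) by (intro image_mset_subseteq_mono subset_imp_msubset_mset_set) auto
  also have "\<dots> = mset xs"
    by (metis map_nth mset_map mset_upt)
  finally have "sum_list ?Ts \<subseteq># mset xs" .
  moreover have "\<forall>T\<in>set ?Ts. T \<noteq> {#} \<and> sum_mset T = 0"
    using fin AB(4-7) by (simp add: mset_set_empty_iff sum_unfold_sum_mset[symmetric])
  ultimately show ?thesis
    unfolding has_k_disjoint_zs_def by (intro exI[of _ ?Ts]) simp
qed

lemma has_two_disjoint_zs_if_size:
  fixes S :: "('i \<Rightarrow> bit) multiset"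
  assumes "finite I" "set_mset S \<subseteq> vectors_on I" "3 * card I + 4 \<le> 2 * size S"
  shows "has_k_disjoint_zs 2 S"
proof -
  obtain xs where S: "S = mset xs"
    by (metis ex_mset)
  have "nth xs ` {0..<length xs} \<subseteq> vectors_on I"
    using assms(2) unfolding S by auto
  moreover have "\<not> 2 * card {0..<length xs} \<le> 3 * card I + 3"
    using assms(3) unfolding S by simp
  ultimately have "two_disjoint_zero_sums (nth xs) {0..<length xs}"
    using double_card_le_if_no_two_disjoint_zero_sums[OF assms(1) finite_atLeastLessThan] by blast
  then show ?thesis
    unfolding S by (rule has_two_disjoint_zs_mset)
qed

theorem theorem7p8:
  fixes r :: nat
  shows "real (Dk 2 (C2r r)) < (3 * real r + 6) / 2"
proof -
  have C2r: "C2r r = vectors_on {..<r}"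
    by (auto simp: C2r_def vectors_on_def)
  have "Dk 2 (C2r r) \<le> (3 * r + 5) div 2"
    unfolding Dk_def
  proof (rule Least_le, intro allI impI)
    fix S :: "(nat \<Rightarrow> bit) multiset"
    assume "set_mset S \<subseteq> C2r r" "(3 * r + 5) div 2 \<le> size S"
    then show "has_k_disjoint_zs 2 S"
      unfolding C2r by (intro has_two_disjoint_zs_if_size[of "{..<r}"]) auto
  qed
  then have "2 * Dk 2 (C2r r) \<le> 3 * r + 5"
    by linarith
  then have "2 * real (Dk 2 (C2r r)) \<le> 3 * real r + 5"
    by linarith
  then show ?thesis
    by (simp add: field_simps)
qed

end
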